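(* Let $G$ be a connected simple graph with $n \geq 2$ vertices $v_1, \ldots, v_n$, and let $x = (x_1, \ldots, x_n)$ be an eigenvector of $L(G)$ corresponding to the eigenvalue $\lambda_2(G)$. Suppose that $x_1 = \max_i x_i$ and $x_2 = \min_i x_i$, and that the graph distance between $v_1$ and $v_2$ in $G$ is at most $2$. Then $\lambda(G) \geq 1$. In particular, every connected simple graph $G$ with $n\ge 2$ vertices and diameter less than $3$ satisfies $\lambda(G) \geq 1$.
   Context: For a simple graph $G$ on $n$ vertices, $L(G) = D(G) - A(G)$ is its Laplacian matrix ($A(G)$ the adjacency matrix, $D(G)$ the diagonal degree matrix), with eigenvalues $0 = \lambda_1(G) \leq \lambda_2(G) \leq \cdots \leq \lambda_n(G)$, and $\lambda(G) := \lambda_2(G)$ (the algebraic connectivity). Coordinate $x_i$ of a vector $x \in \mathbb{R}^n$ corresponds to vertex $v_i$. *)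

theory Defs
  imports "Jordan_Normal_Form.Char_Poly" "HOL-Library.Multiset"
begin

text \<open>Simple graphs on the vertex set {0..<n} (vertex v_i is index i-1),
  given by an adjacency relation E.\<close>

definition simple_graph :: "nat \<Rightarrow> (nat \<Rightarrow> nat \<Rightarrow> bool) \<Rightarrow> bool" where
  "simple_graph n E \<longleftrightarrow>
     (\<forall>i j. E i j \<longrightarrow> i < n \<and> j < n) \<and>
     (\<forall>i j. E i j \<longrightarrow> E j i) \<and>
     (\<forall>i. \<not> E i i)"

definition connected_graph :: "nat \<Rightarrow> (nat \<Rightarrow> nat \<Rightarrow> bool) \<Rightarrow> bool" where
  "connected_graph n E \<longleftrightarrow> (\<forall>i<n. \<forall>j<n. E\<^sup>*\<^sup>* i j)"

definition dist_le :: "(nat \<Rightarrow> nat \<Rightarrow> bool) \<Rightarrow> nat \<Rightarrow> nat \<Rightarrow> nat \<Rightarrow> bool" where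
  "dist_le E u v d \<longleftrightarrow> (\<exists>m\<le>d. (E ^^ m) u v)"

definition diameter_lt3 :: "nat \<Rightarrow> (nat \<Rightarrow> nat \<Rightarrow> bool) \<Rightarrow> bool" where
  "diameter_lt3 n E \<longleftrightarrow> (\<forall>i<n. \<forall>j<n. dist_le E i j 2)"

definition degree :: "nat \<Rightarrow> (nat \<Rightarrow> nat \<Rightarrow> bool) \<Rightarrow> nat \<Rightarrow> nat" where
  "degree n E i = card {k. k < n \<and> E i k}"

definition laplacian :: "nat \<Rightarrow> (nat \<Rightarrow> nat \<Rightarrow> bool) \<Rightarrow> real mat" where
  "laplacian n E = mat n n (\<lambda>(i, j).
     (if i = j then real (degree n E i) else 0) - (if E i j then 1 else 0))"

text \<open>Laplacian eigenvalues with multiplicity, in nondecreasing order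
  (the roots of the characteristic polynomial; L is real symmetric so all are real).\<close>
definition lap_eigenvalues :: "nat \<Rightarrow> (nat \<Rightarrow> nat \<Rightarrow> bool) \<Rightarrow> real list" where
  "lap_eigenvalues n E = sorted_list_of_multiset (proots (char_poly (laplacian n E)))"

definition alg_conn :: "nat \<Rightarrow> (nat \<Rightarrow> nat \<Rightarrow> bool) \<Rightarrow> real" where
  "alg_conn n E = lap_eigenvalues n E ! 1"

end

theory Submission
  imports Defs "Jordan_Normal_Form.Jordan_Normal_Form_Existence"
    "Jordan_Normal_Form.Jordan_Normal_Form_Uniqueness"
begin

text \<open>
  Let \<open>M = x\<^sub>a\<close> and \<open>m = x\<^sub>b\<close> be the maximum and the minimum of the eigenvector \<open>x\<close>.
  The eigen-equations at \<open>a\<close> and \<open>b\<close> read \<open>\<mu> M = \<Sum> (M - x\<^sub>k)\<close> and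
  \<open>-\<mu> m = \<Sum> (x\<^sub>k - m)\<close>, summed over the neighbours \<open>k\<close> of \<open>a\<close> and of \<open>b\<close>
  respectively; all terms are nonnegative. A common neighbour \<open>c\<close>
  of \<open>a\<close> and \<open>b\<close> contributes \<open>M - x\<^sub>c\<close> to the first and \<open>x\<^sub>c - m\<close> to the second, so
  \<open>\<mu> (M - m) \<ge> M - m\<close> (an edge between \<open>a\<close> and \<open>b\<close> even gives \<open>\<mu> \<ge> 2\<close>).
  Hence \<open>\<mu> \<ge> 1\<close>, provided \<open>M > m\<close>; and \<open>x\<close> is not constant unless \<open>\<mu> = 0\<close>.

  That \<open>\<lambda>\<^sub>2 > 0\<close> for a connected graph is where the linear algebra goes: the Laplacian
  \<open>L\<close> is real symmetric, so its characteristic polynomial splits over the reals, and since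
  \<open>ker L\<^sup>2 = ker L\<close> every Jordan block for the eigenvalue 0 has size 1. Thus the multiplicity
  of the root 0 is \<open>dim ker L\<close>, which is 1 because \<open>L\<close> only annihilates constant vectors.
\<close>

lemma symmetric_mat_kernel_square:
  fixes A :: "real mat"
  assumes A: "A \<in> carrier_mat n n" and sym: "A\<^sup>T = A"
  shows "mat_kernel (A * A) = mat_kernel A"
proof
  show "mat_kernel A \<subseteq> mat_kernel (A * A)"
    using mat_kernel_mult_subset[OF A A] .
next
  show "mat_kernel (A * A) \<subseteq> mat_kernel A"
  proof
    fix v assume "v \<in> mat_kernel (A * A)"
    then have v: "v \<in> carrier_vec n" and AAv: "A *\<^sub>v (A *\<^sub>v v) = 0\<^sub>v n"
      using A by (auto simp: mat_kernel_def)
    have "(A *\<^sub>v v) \<bullet> (A *\<^sub>v v) = (A\<^sup>T *\<^sub>v (A *\<^sub>v v)) \<bullet> v"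
      using transpose_vec_mult_scalar[OF A v, of "A *\<^sub>v v"] A v by simp
    also have "\<dots> = 0"
      using sym AAv v by simp
    finally have "A *\<^sub>v v = 0\<^sub>v n"
      using conjugate_square_eq_0_vec[of "A *\<^sub>v v" n] A v by simp
    then show "v \<in> mat_kernel A"
      using A v by (simp add: mat_kernel_def)
  qed
qed

lemma symmetric_mat_complex_eigenvalue_real:
  fixes A :: "real mat"
  assumes A: "A \<in> carrier_mat n n" and sym: "A\<^sup>T = A"
    and ev: "eigenvalue (map_mat complex_of_real A) a"
  shows "Im a = 0"
proof -
  let ?C = "map_mat complex_of_real A"
  have C: "?C \<in> carrier_mat n n" and symC: "?C\<^sup>T = ?C"
    using A sym by (auto simp: map_mat_transpose)
  from ev obtain w where w: "w \<in> carrier_vec n" and w0: "w \<noteq> 0\<^sub>v n"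
    and Cw: "?C *\<^sub>v w = a \<cdot>\<^sub>v w"
    using C unfolding eigenvalue_def eigenvector_def by auto
  have conj_Cw: "conjugate (?C *\<^sub>v w) = ?C *\<^sub>v conjugate w"
    using A w by (intro eq_vecI) (auto simp: scalar_prod_def sum_conjugate conjugate_dist_mul)
  have "a * (w \<bullet>c w) = (?C *\<^sub>v w) \<bullet>c w"
    using Cw w by simp
  also have "\<dots> = w \<bullet> (?C *\<^sub>v conjugate w)"
    using transpose_vec_mult_scalar[OF C carrier_vec_conjugate[OF w] w] symC by simp
  also have "\<dots> = w \<bullet> (cnj a \<cdot>\<^sub>v conjugate w)"
    using conj_Cw Cw by (simp add: conjugate_smult_vec)
  also have "\<dots> = cnj a * (w \<bullet>c w)"
    using w by simp
  finally have "(a - cnj a) * (w \<bullet>c w) = 0"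
    by (simp add: algebra_simps)
  with w w0 have "a = cnj a"
    by simp
  then show ?thesis
    by (simp add: complex_eq_iff)
qed

lemma symmetric_mat_char_poly_splits:
  fixes A :: "real mat"
  assumes A: "A \<in> carrier_mat n n" and sym: "A\<^sup>T = A"
  obtains es where "char_poly A = (\<Prod>e\<leftarrow>es. [:- e, 1:])" and "length es = n"
proof -
  interpret of_real_poly: map_poly_inj_idom_hom complex_of_real ..
  let ?C = "map_mat complex_of_real A"
  have C: "?C \<in> carrier_mat n n"
    using A by simp
  obtain as where cp: "char_poly ?C = (\<Prod>a\<leftarrow>as. [:- a, 1:])" and len: "length as = n"
    using char_poly_factorized[OF C] by auto
  have "Im a = 0" if "a \<in> set as" for a
  proof (rule symmetric_mat_complex_eigenvalue_real[OF A sym])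
    show "eigenvalue ?C a"
      using that eigenvalue_root_char_poly[OF C] unfolding cp poly_prod_list
      by (auto simp: prod_list_zero_iff)
  qed
  then have as: "as = map (complex_of_real \<circ> Re) as"
    by (induct as) (auto simp: complex_eq_iff)
  have "map_poly complex_of_real (char_poly A) = char_poly ?C"
    by (rule of_real_hom.char_poly_hom[symmetric, OF A])
  also have "\<dots> = map_poly complex_of_real (\<Prod>e\<leftarrow>map Re as. [:- e, 1:])"
    by (subst cp, subst as) (simp add: of_real_poly.hom_prod_list o_def)
  finally have "char_poly A = (\<Prod>e\<leftarrow>map Re as. [:- e, 1:])"
    by (rule of_real_poly.injectivity)
  with len show ?thesis
    using that[of "map Re as"] by simp
qed

lemma sum_list_eq_if_min_2_eq_min_1:
  fixes ks :: "nat list"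
  assumes "sum_list (map (min 2) ks) = sum_list (map (min 1) ks)"
  shows "sum_list ks = sum_list (map (min 1) ks)"
  using assms
proof (induct ks)
  case (Cons k ks)
  have "sum_list (map (min 1) ks) \<le> sum_list (map (min 2) ks)"
    by (induct ks) auto
  with Cons show ?case
    by auto
qed simp

lemma symmetric_mat_order_0_char_poly:
  fixes A :: "real mat"
  assumes A: "A \<in> carrier_mat n n" and sym: "A\<^sup>T = A"
  shows "Polynomial.order 0 (char_poly A) = kernel_dim A"
proof -
  obtain es where "char_poly A = (\<Prod>e\<leftarrow>es. [:- e, 1:])"
    using symmetric_mat_char_poly_splits[OF A sym] .
  then obtain n_as where jnf: "jordan_nf A n_as"
    using jordan_nf_exists[OF A] by blast
  define ks where "ks = map fst [(k, e)\<leftarrow>n_as. e = 0]"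
  have char_matrix_0: "char_matrix A 0 = A"
    using A unfolding char_matrix_def by auto
  have "dim_gen_eigenspace A 0 k = sum_list (map (min k) ks)" for k
    unfolding ks_def dim_gen_eigenspace[OF jnf] ..
  moreover have "dim_gen_eigenspace A 0 2 = dim_gen_eigenspace A 0 1"
    using A symmetric_mat_kernel_square[OF A sym]
    by (simp add: dim_gen_eigenspace_def char_matrix_0 kernel_dim_def numeral_2_eq_2)
  moreover have "dim_gen_eigenspace A 0 1 = kernel_dim A"
    using A by (simp add: dim_gen_eigenspace_def char_matrix_0)
  moreover have "Polynomial.order 0 (char_poly A) = sum_list ks"
    unfolding jordan_nf_order[OF jnf] ks_def by (simp add: case_prod_beta')
  ultimately show ?thesis
    using sum_list_eq_if_min_2_eq_min_1[of ks] by simp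
qed

lemma proots_prod_linear_factors:
  "proots (\<Prod>e\<leftarrow>es. [:- e, 1:]) = mset (es :: 'a :: idom list)"
proof (induct es)
  case (Cons e es)
  have "(\<Prod>e\<leftarrow>es. [:- e, 1:]) \<noteq> (0 :: 'a poly)"
    by (auto simp: prod_list_zero_iff)
  with Cons show ?case
    by (simp add: proots_mult del: mult_pCons_left)
qed simp

lemma char_poly_neq_0:
  assumes "A \<in> carrier_mat n n"
  shows "char_poly A \<noteq> 0"
proof
  assume "char_poly A = 0"
  with degree_monic_char_poly[OF assms] show False
    by simp
qed

lemma dim_laplacian [simp]:
  "dim_row (laplacian n E) = n" "dim_col (laplacian n E) = n"
  by (simp_all add: laplacian_def)

lemma laplacian_carrier [simp]: "laplacian n E \<in> carrier_mat n n"
  by (rule carrier_matI) simp_all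

lemma laplacian_symmetric:
  assumes "simple_graph n E"
  shows "(laplacian n E)\<^sup>T = laplacian n E"
proof (rule eq_matI)
  fix i j assume "i < dim_row (laplacian n E)" "j < dim_col (laplacian n E)"
  then show "(laplacian n E)\<^sup>T $$ (i, j) = laplacian n E $$ (i, j)"
    using assms unfolding simple_graph_def by (auto simp: laplacian_def)
qed auto

lemma laplacian_mult_vec:
  assumes v: "v \<in> carrier_vec n" and i: "i < n"
  shows "(laplacian n E *\<^sub>v v) $ i = (\<Sum>k | k < n \<and> E i k. v $ i - v $ k)"
proof -
  let ?N = "{k. k < n \<and> E i k}"
  have "(laplacian n E *\<^sub>v v) $ i
      = (\<Sum>k<n. (if i = k then real (degree n E i) * v $ k else 0) - (if E i k then v $ k else 0))"
    using v i by (auto simp: laplacian_def scalar_prod_def lessThan_atLeast0 left_diff_distrib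
        intro!: sum.cong)
  also have "\<dots> = real (card ?N) * v $ i - (\<Sum>k\<in>?N. v $ k)"
    using i by (simp add: sum_subtractf sum.If_cases Int_def lessThan_def conj_commute degree_def)
  also have "\<dots> = (\<Sum>k\<in>?N. v $ i - v $ k)"
    by (simp add: sum_subtractf)
  finally show ?thesis .
qed

lemma laplacian_quadratic_form:
  assumes E: "simple_graph n E" and v: "v \<in> carrier_vec n"
  shows "2 * (v \<bullet> (laplacian n E *\<^sub>v v))
    = (\<Sum>i<n. \<Sum>k<n. if E i k then (v $ i - v $ k)\<^sup>2 else 0)"
proof -
  let ?f = "\<lambda>i k. if E i k then v $ i * (v $ i - v $ k) else 0"
  have "v \<bullet> (laplacian n E *\<^sub>v v) = (\<Sum>i<n. v $ i * (laplacian n E *\<^sub>v v) $ i)"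
    using v by (simp add: scalar_prod_def lessThan_atLeast0)
  also have "\<dots> = (\<Sum>i<n. \<Sum>k<n. ?f i k)"
    using v by (intro sum.cong refl) (simp add: laplacian_mult_vec sum_distrib_left
        sum.inter_filter[symmetric] lessThan_def del: index_mult_mat_vec)
  finally have form: "v \<bullet> (laplacian n E *\<^sub>v v) = (\<Sum>i<n. \<Sum>k<n. ?f i k)" .
  have swap: "(\<Sum>i<n. \<Sum>k<n. ?f i k) = (\<Sum>i<n. \<Sum>k<n. ?f k i)"
    by (rule sum.swap)
  have pair: "?f i k + ?f k i = (if E i k then (v $ i - v $ k)\<^sup>2 else 0)" for i k
    using E by (auto simp: simple_graph_def power2_eq_square algebra_simps)
  have "2 * (v \<bullet> (laplacian n E *\<^sub>v v))
      = (\<Sum>i<n. \<Sum>k<n. ?f i k) + (\<Sum>i<n. \<Sum>k<n. ?f k i)"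
    using form swap by simp
  also have "\<dots> = (\<Sum>i<n. \<Sum>k<n. ?f i k + ?f k i)"
    by (simp only: sum.distrib)
  also have "\<dots> = (\<Sum>i<n. \<Sum>k<n. if E i k then (v $ i - v $ k)\<^sup>2 else 0)"
    by (simp only: pair)
  finally show ?thesis .
qed

lemma laplacian_kernel_const:
  assumes E: "simple_graph n E" and conn: "connected_graph n E"
    and v: "v \<in> carrier_vec n" and Lv: "laplacian n E *\<^sub>v v = 0\<^sub>v n"
    and i: "i < n" and j: "j < n"
  shows "v $ i = v $ j"
proof -
  let ?g = "\<lambda>i k. if E i k then (v $ i - v $ k)\<^sup>2 else 0"
  have "(\<Sum>i<n. \<Sum>k<n. ?g i k) = 0"
    using laplacian_quadratic_form[OF E v] Lv v by simp
  then have "?g i k = 0" if "i < n" "k < n" for i k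
    using that by (simp add: sum_nonneg_eq_0_iff sum_nonneg)
  then have edge: "v $ i = v $ k" if "E i k" for i k
    using that E unfolding simple_graph_def by (metis power_eq_0_iff right_minus_eq)
  have "E\<^sup>*\<^sup>* i j"
    using conn i j unfolding connected_graph_def by blast
  then show ?thesis
    by induct (auto dest: edge)
qed

lemma laplacian_eigenvalue_nonneg:
  assumes E: "simple_graph n E" and ev: "eigenvalue (laplacian n E) \<mu>"
  shows "0 \<le> \<mu>"
proof -
  obtain v where v: "v \<in> carrier_vec n" and v0: "v \<noteq> 0\<^sub>v n"
    and Lv: "laplacian n E *\<^sub>v v = \<mu> \<cdot>\<^sub>v v"
    using ev unfolding eigenvalue_def eigenvector_def by auto
  have "0 \<le> v \<bullet> (laplacian n E *\<^sub>v v)"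
    using laplacian_quadratic_form[OF E v] by (smt (verit) sum_nonneg zero_le_power2)
  also have "\<dots> = \<mu> * (v \<bullet> v)"
    using Lv v by simp
  finally show ?thesis
    using conjugate_square_greater_0_vec[OF v] v0 by (simp add: zero_le_mult_iff)
qed

lemma laplacian_kernel_dim_le_1:
  assumes E: "simple_graph n E" and conn: "connected_graph n E"
  shows "kernel_dim (laplacian n E) \<le> 1"
proof -
  let ?L = "laplacian n E"
  let ?one = "vec n (\<lambda>_. 1) :: real vec"
  interpret K: kernel n n ?L
    by (unfold_locales, rule laplacian_carrier)
  have "?L *\<^sub>v ?one = 0\<^sub>v n"
  proof (rule eq_vecI)
    fix i assume "i < dim_vec (0\<^sub>v n :: real vec)"
    then show "(?L *\<^sub>v ?one) $ i = 0\<^sub>v n $ i"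
      using laplacian_mult_vec[of ?one n i E] by simp
  qed simp
  then have sub: "{?one} \<subseteq> mat_kernel ?L"
    using mat_kernelI[OF laplacian_carrier] by simp
  have span_sub: "K.span {?one} \<subseteq> mat_kernel ?L"
    using K.Ker.span_is_submodule[OF sub] by (simp add: submodule_def)
  have "mat_kernel ?L \<subseteq> K.span {?one}"
  proof
    fix v assume "v \<in> mat_kernel ?L"
    then have v: "v \<in> carrier_vec n" and Lv: "?L *\<^sub>v v = 0\<^sub>v n"
      using mat_kernelD[OF laplacian_carrier] by blast+
    have "v = v $ 0 \<cdot>\<^sub>v ?one"
    proof (rule eq_vecI)
      fix i assume "i < dim_vec (v $ 0 \<cdot>\<^sub>v ?one)"
      then show "v $ i = (v $ 0 \<cdot>\<^sub>v ?one) $ i"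
        using laplacian_kernel_const[OF E conn v Lv, of i 0] by simp
    qed (use v in simp)
    also have "\<dots> \<in> K.span {?one}"
      using submodule.smult_closed[OF K.Ker.span_is_submodule[OF sub]] K.Ker.in_own_span[OF sub]
      by simp
    finally show "v \<in> K.span {?one}" .
  qed
  with span_sub K.Ker.gen_ge_dim[of "{?one}"] sub show ?thesis
    by simp
qed

lemma eigenvalue_of_mem_lap_eigenvalues:
  assumes "e \<in> set (lap_eigenvalues n E)"
  shows "eigenvalue (laplacian n E) e"
  using assms char_poly_neq_0[OF laplacian_carrier]
  by (simp add: lap_eigenvalues_def eigenvalue_root_char_poly[OF laplacian_carrier])

lemma length_lap_eigenvalues:
  assumes "simple_graph n E"
  shows "length (lap_eigenvalues n E) = n"
proof -
  obtain es where "char_poly (laplacian n E) = (\<Prod>e\<leftarrow>es. [:- e, 1:])" and "length es = n"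
    using symmetric_mat_char_poly_splits[OF laplacian_carrier laplacian_symmetric[OF assms]] .
  then show ?thesis
    by (simp add: lap_eigenvalues_def proots_prod_linear_factors)
qed

lemma count_0_lap_eigenvalues:
  assumes E: "simple_graph n E" and conn: "connected_graph n E"
  shows "count (mset (lap_eigenvalues n E)) 0 \<le> 1"
  using symmetric_mat_order_0_char_poly[OF laplacian_carrier laplacian_symmetric[OF E]]
    laplacian_kernel_dim_le_1[OF E conn] char_poly_neq_0[OF laplacian_carrier]
  by (simp add: lap_eigenvalues_def)

lemma alg_conn_eigenvalue:
  assumes "n \<ge> 2" and "simple_graph n E"
  shows "eigenvalue (laplacian n E) (alg_conn n E)"
  using assms length_lap_eigenvalues[of n E]
  by (auto simp: alg_conn_def intro: eigenvalue_of_mem_lap_eigenvalues)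

lemma alg_conn_pos:
  assumes n: "n \<ge> 2" and E: "simple_graph n E" and conn: "connected_graph n E"
  shows "0 < alg_conn n E"
proof -
  obtain a b rest where ev: "lap_eigenvalues n E = a # b # rest"
    using length_lap_eigenvalues[OF E] n
    by (metis One_nat_def Suc_1 Suc_le_length_iff)
  have "a \<le> b"
    using sorted_sorted_list_of_multiset ev unfolding lap_eigenvalues_def by (metis sorted2)
  moreover have "0 \<le> a"
    using ev eigenvalue_of_mem_lap_eigenvalues laplacian_eigenvalue_nonneg[OF E]
    by (metis list.set_intros(1))
  moreover have "\<not> (a = 0 \<and> b = 0)"
    using count_0_lap_eigenvalues[OF E conn] ev by auto
  ultimately show ?thesis
    using ev by (auto simp: alg_conn_def)
qed

lemma laplacian_eigenvector_eq:
  assumes ev: "eigenvector (laplacian n E) x \<mu>" and i: "i < n"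
  shows "\<mu> * x $ i = (\<Sum>k | k < n \<and> E i k. x $ i - x $ k)"
proof -
  have x: "x \<in> carrier_vec n" and "laplacian n E *\<^sub>v x = \<mu> \<cdot>\<^sub>v x"
    using ev unfolding eigenvector_def by auto
  then show ?thesis
    using laplacian_mult_vec[OF x i, of E] i by simp
qed

lemma laplacian_eigenvector_min_lt_max:
  assumes ev: "eigenvector (laplacian n E) x \<mu>" and "\<mu> \<noteq> 0"
    and a: "a < n" and max: "\<forall>i<n. x $ i \<le> x $ a"
    and b: "b < n" and min: "\<forall>i<n. x $ b \<le> x $ i"
  shows "x $ b < x $ a"
proof (rule ccontr)
  assume "\<not> x $ b < x $ a"
  then have const: "x $ i = x $ a" if "i < n" for i
    using max min that by (meson order.antisym order.trans not_less)
  obtain i where i: "i < n" and "x $ i \<noteq> 0"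
    using ev unfolding eigenvector_def by (auto simp: vec_eq_iff)
  moreover have "\<mu> * x $ i = 0"
    using laplacian_eigenvector_eq[OF ev i] const i by simp
  ultimately show False
    using \<open>\<mu> \<noteq> 0\<close> by simp
qed

lemma laplacian_eigenvector_max_bound:
  assumes ev: "eigenvector (laplacian n E) x \<mu>" and a: "a < n"
    and max: "\<forall>i<n. x $ i \<le> x $ a" and c: "c < n" "E a c"
  shows "x $ a - x $ c \<le> \<mu> * x $ a"
  unfolding laplacian_eigenvector_eq[OF ev a]
  using max c by (intro member_le_sum) auto

lemma laplacian_eigenvector_min_bound:
  assumes ev: "eigenvector (laplacian n E) x \<mu>" and b: "b < n"
    and min: "\<forall>i<n. x $ b \<le> x $ i" and c: "c < n" "E b c"
  shows "x $ c - x $ b \<le> - \<mu> * x $ b"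
proof -
  have "x $ c - x $ b \<le> (\<Sum>k | k < n \<and> E b k. x $ k - x $ b)"
    using min c by (intro member_le_sum) auto
  also have "\<dots> = - \<mu> * x $ b"
    by (simp add: laplacian_eigenvector_eq[OF ev b] flip: sum_negf)
  finally show ?thesis .
qed

lemma dist_le_2_cases:
  assumes "dist_le E a b 2"
  shows "a = b \<or> E a b \<or> (\<exists>c. E a c \<and> E c b)"
proof -
  obtain m where "m \<le> 2" and "(E ^^ m) a b"
    using assms unfolding dist_le_def by auto
  then consider "(E ^^ 0) a b" | "(E ^^ 1) a b" | "(E ^^ 2) a b"
    by (metis le_SucE One_nat_def Suc_1 le_zero_eq)
  then show ?thesis
    by cases (auto simp: numeral_2_eq_2)
qed

lemma laplacian_eigenvalue_ge_1:
  assumes E: "simple_graph n E" and ev: "eigenvector (laplacian n E) x \<mu>" and "\<mu> \<noteq> 0"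
    and a: "a < n" and max: "\<forall>i<n. x $ i \<le> x $ a"
    and b: "b < n" and min: "\<forall>i<n. x $ b \<le> x $ i"
    and dist: "dist_le E a b 2"
  shows "1 \<le> \<mu>"
proof -
  have "x $ b < x $ a"
    using laplacian_eigenvector_min_lt_max[OF ev \<open>\<mu> \<noteq> 0\<close> a max b min] .
  have E_sym: "E j i" if "E i j" for i j
    using that E unfolding simple_graph_def by blast
  have E_dom: "i < n" "j < n" if "E i j" for i j
    using that E unfolding simple_graph_def by blast+
  consider "a = b" | "E a b" | c where "E a c" "E c b"
    using dist_le_2_cases[OF dist] by blast
  then have "x $ a - x $ b \<le> \<mu> * (x $ a - x $ b)"
  proof cases
    case 1
    then show ?thesis
      using \<open>x $ b < x $ a\<close> by simp
  next
    case 2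
    have "x $ a - x $ b \<le> \<mu> * x $ a" "x $ a - x $ b \<le> - \<mu> * x $ b"
      using laplacian_eigenvector_max_bound[OF ev a max b 2]
        laplacian_eigenvector_min_bound[OF ev b min a E_sym[OF 2]] by simp_all
    then show ?thesis
      using \<open>x $ b < x $ a\<close> by (simp add: right_diff_distrib)
  next
    case (3 c)
    have "x $ a - x $ c \<le> \<mu> * x $ a" "x $ c - x $ b \<le> - \<mu> * x $ b"
      using laplacian_eigenvector_max_bound[OF ev a max E_dom(2)[OF 3(1)] 3(1)]
        laplacian_eigenvector_min_bound[OF ev b min E_dom(1)[OF 3(2)] E_sym[OF 3(2)]] by simp_all
    then show ?thesis
      by (simp add: right_diff_distrib)
  qed
  with \<open>x $ b < x $ a\<close> show ?thesis
    by simp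
qed

theorem lemma4:
  shows "(\<forall>(n::nat) E (x::real vec).
            n \<ge> 2 \<longrightarrow> simple_graph n E \<longrightarrow> connected_graph n E \<longrightarrow>
            eigenvector (laplacian n E) x (alg_conn n E) \<longrightarrow>
            (\<forall>i<n. x $ i \<le> x $ 0) \<longrightarrow> (\<forall>i<n. x $ 1 \<le> x $ i) \<longrightarrow>
            dist_le E 0 1 2 \<longrightarrow> alg_conn n E \<ge> 1)
       \<and> (\<forall>(n::nat) E.
            n \<ge> 2 \<longrightarrow> simple_graph n E \<longrightarrow> connected_graph n E \<longrightarrow>
            diameter_lt3 n E \<longrightarrow> alg_conn n E \<ge> 1)"
proof (intro conjI allI impI)
  fix n E and x :: "real vec"
  assume n: "n \<ge> 2" and E: "simple_graph n E" and conn: "connected_graph n E"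
    and ev: "eigenvector (laplacian n E) x (alg_conn n E)"
    and max: "\<forall>i<n. x $ i \<le> x $ 0" and min: "\<forall>i<n. x $ 1 \<le> x $ i"
    and dist: "dist_le E 0 1 2"
  show "alg_conn n E \<ge> 1"
    using laplacian_eigenvalue_ge_1[OF E ev _ _ max _ min dist] alg_conn_pos[OF n E conn] n
    by simp
next
  fix n E
  assume n: "n \<ge> 2" and E: "simple_graph n E" and conn: "connected_graph n E"
    and diam: "diameter_lt3 n E"
  obtain x where ev: "eigenvector (laplacian n E) x (alg_conn n E)"
    using alg_conn_eigenvalue[OF n E] unfolding eigenvalue_def by blast
  let ?values = "(\<lambda>i. x $ i) ` {..<n}"
  have x_values: "finite ?values" "?values \<noteq> {}"
    using n by (auto simp: lessThan_empty_iff)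
  obtain a where a: "a < n" "x $ a = Max ?values"
    using Max_in[OF x_values] by auto
  obtain b where b: "b < n" "x $ b = Min ?values"
    using Min_in[OF x_values] by auto
  show "alg_conn n E \<ge> 1"
    using laplacian_eigenvalue_ge_1[OF E ev _ a(1) _ b(1)] alg_conn_pos[OF n E conn] diam a b
    unfolding diameter_lt3_def by simp
qed

end
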